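(* For all $[g],[h]\in L(4,1)$, the sub-Riemannian distance $\hat d$ on $L(4,1)$ satisfies $$\hat d([g],[h])=\min_{h_1\in[h]} d(g_1,h_1),$$ independently of the choice of $g_1\in[g]$, where $d$ is the sub-Riemannian distance on $SU(2)$.
   Context: $SU(2)$ carries the sub-Riemannian structure with distribution $\Delta(g)=g\,\mathrm{span}\{p_1,p_2\}$, where $p_1=\frac12\begin{pmatrix}0&1\\-1&0\end{pmatrix}$, $p_2=\frac12\begin{pmatrix}0&i\\i&0\end{pmatrix}$, and metric making $gp_1,gp_2$ orthonormal; $d(g,h)$ is the infimum of lengths $\int\sqrt{\mathbf{g}(\dot\gamma,\dot\gamma)}dt$ of horizontal Lipschitz curves joining $g$ to $h$. $g_1\approx g_2$ iff they admit representations $g_i=e^{-b_ip_2}e^{a_ip_1}e^{c_ip_2}$ ($a_i\in[0,\pi]$, $b_i\in[0,2\pi)$, $c_i\in\mathbb{R}/4\pi$) with equal $a$, equal $b$, and $c_1\equiv c_2\bmod\pi$. $L(4,1)=SU(2)/\!\approx$ carries the sub-Riemannian structure induced via the quotient map $\Pi$ (distribution $\Pi_*\Delta$, metric pushed forward), and $\hat d$ is its Carnot–Carathéodory distance; $[h]$ denotes the class of $h$. *)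

theory Defs
  imports "HOL-Analysis.Analysis"
begin

type_synonym cmat = "complex^2^2"

definition mat2 :: "complex \<Rightarrow> complex \<Rightarrow> complex \<Rightarrow> complex \<Rightarrow> cmat" where
  "mat2 a b c d = (\<chi> i j. if i = 1 then (if j = 1 then a else b) else (if j = 1 then c else d))"

definition adj :: "cmat \<Rightarrow> cmat" where
  "adj g = (\<chi> i j. cnj (g $ j $ i))"

definition SU2 :: "cmat set" where
  "SU2 = {g. g ** adj g = mat 1 \<and> det g = 1}"

definition p1 :: cmat where "p1 = mat2 0 (1/2) (-1/2) 0"
definition p2 :: cmat where "p2 = mat2 0 (\<i>/2) (\<i>/2) 0"

text \<open>The one-parameter subgroups exp(t p1), exp(t p2), written in closed form
  (p1^2 = p2^2 = -I/4, so exp(t p) = cos(t/2) I + 2 sin(t/2) p).\<close>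
definition exp_p1 :: "real \<Rightarrow> cmat" where
  "exp_p1 t = mat2 (cos (t/2)) (sin (t/2)) (- sin (t/2)) (cos (t/2))"
definition exp_p2 :: "real \<Rightarrow> cmat" where
  "exp_p2 t = mat2 (cos (t/2)) (\<i> * sin (t/2)) (\<i> * sin (t/2)) (cos (t/2))"

text \<open>Horizontal Lipschitz curve on [a,b] with controls u1, u2:
  gamma' t = gamma t (u1 t p1 + u2 t p2) for almost every t.  Since gamma p1, gamma p2
  are orthonormal, the speed is sqrt(u1^2+u2^2).\<close>
definition horizontal_on :: "real \<Rightarrow> real \<Rightarrow> (real \<Rightarrow> cmat) \<Rightarrow> (real \<Rightarrow> real) \<Rightarrow> (real \<Rightarrow> real) \<Rightarrow> bool" where
  "horizontal_on a b \<gamma> u1 u2 \<longleftrightarrow> a \<le> b \<and> (\<forall>t\<in>{a..b}. \<gamma> t \<in> SU2) \<and>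
     (\<exists>C. C-lipschitz_on {a..b} \<gamma>) \<and>
     (\<exists>N. N \<in> null_sets lborel \<and>
        (\<forall>t\<in>{a..b} - N. (\<gamma> has_vector_derivative (\<gamma> t ** (u1 t *\<^sub>R p1 + u2 t *\<^sub>R p2))) (at t within {a..b})))"

definition hlength :: "real \<Rightarrow> real \<Rightarrow> (real \<Rightarrow> real) \<Rightarrow> (real \<Rightarrow> real) \<Rightarrow> real" where
  "hlength a b u1 u2 = integral {a..b} (\<lambda>t. sqrt ((u1 t)\<^sup>2 + (u2 t)\<^sup>2))"

definition sr_dist :: "cmat \<Rightarrow> cmat \<Rightarrow> real" where
  "sr_dist g h = Inf {hlength 0 1 u1 u2 | \<gamma> u1 u2.
       horizontal_on 0 1 \<gamma> u1 u2 \<and> \<gamma> 0 = g \<and> \<gamma> 1 = h}"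

text \<open>The equivalence relation defining L(4,1).  c is taken in R (c mod 4 pi is irrelevant,
  since exp(4 pi p2) = I); c1 = c2 mod pi means c1 - c2 is an integer multiple of pi.\<close>
definition lens_rel :: "cmat \<Rightarrow> cmat \<Rightarrow> bool" where
  "lens_rel g1 g2 \<longleftrightarrow> (\<exists>a b c1 c2. 0 \<le> a \<and> a \<le> pi \<and> 0 \<le> b \<and> b < 2*pi \<and>
      g1 = exp_p2 (-b) ** exp_p1 a ** exp_p2 c1 \<and>
      g2 = exp_p2 (-b) ** exp_p1 a ** exp_p2 c2 \<and>
      (\<exists>k::int. c1 - c2 = of_int k * pi))"

definition cls :: "cmat \<Rightarrow> cmat set" where
  "cls g = {h \<in> SU2. lens_rel g h}"

definition L41 :: "cmat set set" where
  "L41 = cls ` SU2"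

text \<open>Horizontal Lipschitz curves in L(4,1) for the structure induced via the quotient map
  (a local diffeomorphism; distribution and metric pushed forward): such a curve is one that,
  on each piece of a finite partition of [0,1], is the image under the quotient map of a
  horizontal Lipschitz curve of SU(2) (a lift through a local inverse chart of the quotient map);
  its length is the sum of the lengths of these pieces.\<close>
definition quot_curve_len :: "(real \<Rightarrow> cmat set) \<Rightarrow> real \<Rightarrow> bool" where
  "quot_curve_len \<sigma> len \<longleftrightarrow> (\<exists>(n::nat) ts \<gamma>s u1s u2s.
      0 < n \<and> ts 0 = 0 \<and> ts n = 1 \<and> (\<forall>i<n. ts i < ts (Suc i)) \<and>
      (\<forall>i<n. horizontal_on (ts i) (ts (Suc i)) (\<gamma>s i) (u1s i) (u2s i) \<and>
              (\<forall>t\<in>{ts i..ts (Suc i)}. cls (\<gamma>s i t) = \<sigma> t)) \<and>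
      len = (\<Sum>i<n. hlength (ts i) (ts (Suc i)) (u1s i) (u2s i)))"

definition quot_dist :: "cmat set \<Rightarrow> cmat set \<Rightarrow> real" where
  "quot_dist x y = Inf {len | \<sigma> len. quot_curve_len \<sigma> len \<and> \<sigma> 0 = x \<and> \<sigma> 1 = y}"

end

theory Submission
  imports Defs
begin

text \<open>The classes of L(4,1) are the orbits of right multiplication by the cyclic group generated by
  exp(\<pi> p2), and conjugation by its elements fixes p2 and maps p1 to \<plusminus>p1.  So right translation
  by this group maps horizontal curves to horizontal curves of the same length.  A horizontal curve
  from g1 to h1 therefore projects to a curve of L(4,1) of the same length; conversely, a curve of
  L(4,1), given piecewise by horizontal lifts, lifts to a horizontal curve from g1 of the same length
  by matching consecutive pieces with such translations, and it ends in [h].  The lengths of curves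
  from [g] to [h] are thus exactly those of horizontal curves from g1 to the four points of [h], and
  the infimum over this finite union is the minimum of the four distances d(g1, h1).  By Euler
  angles SU(2) is horizontally connected, so none of these sets is empty.\<close>

section \<open>Calculus of 2x2 matrices and SU(2)\<close>

lemma mat2_eq_iff: "mat2 a b c d = mat2 a' b' c' d' \<longleftrightarrow> a = a' \<and> b = b' \<and> c = c' \<and> d = d'"
  by (auto simp: mat2_def vec_eq_iff forall_2)

lemma cmat_eq_mat2: "(g::cmat) = mat2 (g$1$1) (g$1$2) (g$2$1) (g$2$2)"
  by (auto simp: mat2_def vec_eq_iff forall_2)

lemma mat2_mult:
  "mat2 a b c d ** mat2 a' b' c' d' = mat2 (a*a'+b*c') (a*b'+b*d') (c*a'+d*c') (c*b'+d*d')"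
  by (auto simp: mat2_def vec_eq_iff forall_2 matrix_matrix_mult_def sum_2)

lemma mat2_add: "mat2 a b c d + mat2 a' b' c' d' = mat2 (a+a') (b+b') (c+c') (d+d')"
  by (auto simp: mat2_def vec_eq_iff forall_2)

lemma mat2_scaleR: "r *\<^sub>R mat2 a b c d = mat2 (r *\<^sub>R a) (r *\<^sub>R b) (r *\<^sub>R c) (r *\<^sub>R d)"
  by (auto simp: mat2_def vec_eq_iff forall_2)

lemma mat_1_eq_mat2: "mat 1 = mat2 1 0 0 1"
  by (auto simp: mat2_def vec_eq_iff forall_2 mat_def)

lemma adj_mat2: "adj (mat2 a b c d) = mat2 (cnj a) (cnj c) (cnj b) (cnj d)"
  by (auto simp: mat2_def adj_def vec_eq_iff forall_2)

lemma det_mat2: "det (mat2 a b c d) = a*d - b*c"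
  by (simp add: det_2 mat2_def)

lemma norm_mat2: "norm (mat2 a b c d) = sqrt ((cmod a)\<^sup>2 + (cmod b)\<^sup>2 + (cmod c)\<^sup>2 + (cmod d)\<^sup>2)"
proof -
  have "norm (mat2 a b c d $ 1) = sqrt ((cmod a)\<^sup>2 + (cmod b)\<^sup>2)"
    and "norm (mat2 a b c d $ 2) = sqrt ((cmod c)\<^sup>2 + (cmod d)\<^sup>2)"
    by (simp_all add: norm_vec_def L2_set_def sum_2 mat2_def)
  then show ?thesis
    by (simp add: norm_vec_def[of "mat2 a b c d"] L2_set_def sum_2 add.assoc)
qed

lemma matrix_add_rdistrib: "((A::cmat) + B) ** C = A ** C + B ** C"
  by (vector matrix_matrix_mult_def sum.distrib[symmetric] field_simps)

lemma matrix_diff_rdistrib: "((A::cmat) - B) ** C = A ** C - B ** C"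
  using matrix_add_rdistrib[of "A - B" B C] by (simp add: algebra_simps)

lemma matrix_diff_ldistrib: "(A::cmat) ** (B - C) = A ** B - A ** C"
  using matrix_add_ldistrib[of A "B - C" C] by (simp add: algebra_simps)

lemma bounded_linear_matrix_mult_left: "bounded_linear (\<lambda>A::cmat. C ** A)"
  unfolding linear_conv_bounded_linear[symmetric]
  by (rule linearI) (simp_all add: matrix_add_ldistrib matrix_scalar_ac scalar_matrix_assoc)

lemma bounded_linear_matrix_mult_right: "bounded_linear (\<lambda>A::cmat. A ** C)"
  unfolding linear_conv_bounded_linear[symmetric]
  by (rule linearI) (simp_all add: matrix_add_rdistrib scalar_matrix_assoc)

lemma SU2_iff_mat2:
  "g \<in> SU2 \<longleftrightarrow> (\<exists>\<alpha> \<beta>. g = mat2 \<alpha> \<beta> (-cnj \<beta>) (cnj \<alpha>) \<and> \<alpha>*cnj \<alpha> + \<beta>*cnj \<beta> = 1)"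
proof
  assume "g \<in> SU2"
  obtain a b c d where g: "g = mat2 a b c d" using cmat_eq_mat2 by blast
  from \<open>g \<in> SU2\<close> have e: "a*cnj a + b*cnj b = 1" "a*cnj c + b*cnj d = 0" "a*d - b*c = 1"
    by (auto simp: SU2_def g mat2_mult adj_mat2 mat_1_eq_mat2 mat2_eq_iff det_mat2)
  have e3: "cnj a * c = - (cnj b * d)"
    using arg_cong[OF e(2), of cnj] by (simp add: mult.commute eq_neg_iff_add_eq_0)
  have "cnj a * (a*d - b*c) = (a*cnj a)*d - b*(cnj a * c)" by (simp add: algebra_simps)
  also have "\<dots> = (a*cnj a + b*cnj b)*d" unfolding e3 by (simp add: algebra_simps)
  finally have d: "d = cnj a" using e by simp
  have "- cnj b * (a*d - b*c) = -a*(cnj b * d) + (b*cnj b)*c" by (simp add: algebra_simps)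
  also have "\<dots> = (a*cnj a + b*cnj b)*c" using e3 by (simp add: algebra_simps)
  finally have c: "c = - cnj b" using e by simp
  show "\<exists>\<alpha> \<beta>. g = mat2 \<alpha> \<beta> (-cnj \<beta>) (cnj \<alpha>) \<and> \<alpha>*cnj \<alpha> + \<beta>*cnj \<beta> = 1"
    using g c d e by blast
next
  assume "\<exists>\<alpha> \<beta>. g = mat2 \<alpha> \<beta> (-cnj \<beta>) (cnj \<alpha>) \<and> \<alpha>*cnj \<alpha> + \<beta>*cnj \<beta> = 1"
  then obtain \<alpha> \<beta> where g: "g = mat2 \<alpha> \<beta> (-cnj \<beta>) (cnj \<alpha>)" and e: "\<alpha>*cnj \<alpha> + \<beta>*cnj \<beta> = 1"
    by blast
  have "g ** adj g = mat2 (\<alpha>*cnj \<alpha> + \<beta>*cnj \<beta>) 0 0 (\<alpha>*cnj \<alpha> + \<beta>*cnj \<beta>)"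
    by (simp add: g adj_mat2 mat2_mult mat2_eq_iff mult.commute)
  moreover have "det g = \<alpha>*cnj \<alpha> + \<beta>*cnj \<beta>" by (simp add: g det_mat2)
  ultimately show "g \<in> SU2" using e by (simp add: SU2_def mat_1_eq_mat2)
qed

lemma SU2_mult: assumes "x \<in> SU2" "y \<in> SU2" shows "x ** y \<in> SU2"
proof -
  obtain a b where x: "x = mat2 a b (-cnj b) (cnj a)" "a*cnj a + b*cnj b = 1"
    using assms SU2_iff_mat2 by blast
  obtain c d where y: "y = mat2 c d (-cnj d) (cnj c)" "c*cnj c + d*cnj d = 1"
    using assms SU2_iff_mat2 by blast
  have "(a*c - b*cnj d) * cnj (a*c - b*cnj d) + (a*d + b*cnj c) * cnj (a*d + b*cnj c)
     = (a*cnj a + b*cnj b) * (c*cnj c + d*cnj d)"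
    by (simp add: algebra_simps)
  moreover have "x ** y = mat2 (a*c - b*cnj d) (a*d + b*cnj c) (-cnj (a*d + b*cnj c)) (cnj (a*c - b*cnj d))"
    by (simp add: x y mat2_mult mat2_eq_iff algebra_simps)
  ultimately show ?thesis using x(2) y(2) unfolding SU2_iff_mat2
    by (intro exI[of _ "a*c - b*cnj d"] exI[of _ "a*d + b*cnj c"]) simp
qed

lemma SU2_adj: assumes "g \<in> SU2" shows "adj g \<in> SU2"
proof -
  obtain \<alpha> \<beta> where "g = mat2 \<alpha> \<beta> (-cnj \<beta>) (cnj \<alpha>)" "\<alpha>*cnj \<alpha> + \<beta>*cnj \<beta> = 1"
    using assms SU2_iff_mat2 by blast
  then show ?thesis unfolding SU2_iff_mat2
    by (intro exI[of _ "cnj \<alpha>"] exI[of _ "- \<beta>"]) (simp add: adj_mat2 mult.commute)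
qed

lemma SU2_mult_adj: "g \<in> SU2 \<Longrightarrow> g ** adj g = mat 1"
  by (simp add: SU2_def)

lemma mat_1_SU2: "mat 1 \<in> SU2"
  unfolding SU2_iff_mat2 by (intro exI[of _ 1] exI[of _ 0]) (simp add: mat_1_eq_mat2)

lemma cmod_unitary_pair:
  assumes "\<alpha>*cnj \<alpha> + \<beta>*cnj \<beta> = 1"
  shows "(cmod (a*\<alpha> - b*cnj \<beta>))\<^sup>2 + (cmod (a*\<beta> + b*cnj \<alpha>))\<^sup>2 = (cmod a)\<^sup>2 + (cmod b)\<^sup>2"
proof -
  have "(a*\<alpha> - b*cnj \<beta>) * cnj (a*\<alpha> - b*cnj \<beta>) + (a*\<beta> + b*cnj \<alpha>) * cnj (a*\<beta> + b*cnj \<alpha>)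
     = (a * cnj a + b * cnj b) * (\<alpha>*cnj \<alpha> + \<beta>*cnj \<beta>)"
    by (simp add: algebra_simps)
  then have "Re ((a*\<alpha> - b*cnj \<beta>) * cnj (a*\<alpha> - b*cnj \<beta>)) + Re ((a*\<beta> + b*cnj \<alpha>) * cnj (a*\<beta> + b*cnj \<alpha>))
     = Re (a * cnj a) + Re (b * cnj b)"
    using assms by (metis mult_1_right plus_complex.sel(1))
  then show ?thesis by (simp only: complex_mult_cnj cmod_power2) simp
qed

lemma norm_mult_SU2_right: assumes "y \<in> SU2" shows "norm (A ** y) = norm (A::cmat)"
proof -
  obtain \<alpha> \<beta> where y: "y = mat2 \<alpha> \<beta> (-cnj \<beta>) (cnj \<alpha>)" and e: "\<alpha>*cnj \<alpha> + \<beta>*cnj \<beta> = 1"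
    using assms SU2_iff_mat2 by blast
  obtain a b c d where A: "A = mat2 a b c d" using cmat_eq_mat2 by blast
  show ?thesis unfolding A y mat2_mult norm_mat2
    using cmod_unitary_pair[OF e, of a b] cmod_unitary_pair[OF e, of c d] by (simp add: add.assoc)
qed

lemma norm_mult_SU2_left: assumes "y \<in> SU2" shows "norm (y ** A) = norm (A::cmat)"
proof -
  obtain \<alpha> \<beta> where y: "y = mat2 \<alpha> \<beta> (-cnj \<beta>) (cnj \<alpha>)" and e: "\<alpha>*cnj \<alpha> + \<beta>*cnj \<beta> = 1"
    using assms SU2_iff_mat2 by blast
  have e': "\<alpha>*cnj \<alpha> + (-cnj \<beta>)*cnj (-cnj \<beta>) = 1" using e by (simp add: mult.commute)
  obtain a b c d where A: "A = mat2 a b c d" using cmat_eq_mat2 by blast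
  show ?thesis unfolding A y mat2_mult norm_mat2
    using cmod_unitary_pair[OF e', of a c] cmod_unitary_pair[OF e', of b d]
    by (simp add: algebra_simps)
qed

section \<open>One-parameter subgroups and Euler angles\<close>

lemma exp_p1_SU2: "exp_p1 t \<in> SU2"
  unfolding SU2_iff_mat2 exp_p1_def
  by (intro exI[of _ "complex_of_real (cos (t/2))"] exI[of _ "complex_of_real (sin (t/2))"])
     (simp add: complex_eq_iff)

lemma exp_p2_SU2: "exp_p2 t \<in> SU2"
  unfolding SU2_iff_mat2 exp_p2_def
  by (intro exI[of _ "complex_of_real (cos (t/2))"] exI[of _ "\<i> * complex_of_real (sin (t/2))"])
     (simp add: complex_eq_iff)

lemma exp_p2_add: "exp_p2 s ** exp_p2 t = exp_p2 (s + t)"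
  by (simp add: exp_p2_def mat2_mult mat2_eq_iff add_divide_distrib cos_add sin_add
      algebra_simps complex_eq_iff)

lemma exp_p1_0: "exp_p1 0 = mat 1"
  by (simp add: exp_p1_def mat_1_eq_mat2)

lemma exp_p2_0: "exp_p2 0 = mat 1"
  by (simp add: exp_p2_def mat_1_eq_mat2)

lemma exp_euler_angles:
  "exp_p2 (-(2*B)) ** exp_p1 (2*A) ** exp_p2 (2*C) =
   mat2 (Complex (cos A * cos (C-B)) (sin A * sin (B+C)))
        (Complex (sin A * cos (B+C)) (cos A * sin (C-B)))
        (- cnj (Complex (sin A * cos (B+C)) (cos A * sin (C-B))))
        (cnj (Complex (cos A * cos (C-B)) (sin A * sin (B+C))))"
  unfolding exp_p2_def exp_p1_def mat2_mult mat2_eq_iff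
  by (simp only: complex_eq_iff) (simp add: cos_add sin_add cos_diff sin_diff algebra_simps)

lemma unit_pair_polar:
  assumes "(cmod z)\<^sup>2 + (cmod w)\<^sup>2 = 1"
  obtains A \<phi> \<psi> where "0 \<le> A" "A \<le> pi/2" "z = rcis (cos A) \<phi>" "w = rcis (sin A) \<psi>"
proof
  have "(cmod z)\<^sup>2 \<le> 1" using assms by (smt (verit) zero_le_power2)
  then have r1: "cmod z \<le> 1" by (simp add: power_le_one_iff abs_le_square_iff[symmetric])
  have r0: "-1 \<le> cmod z" by (rule order_trans[of _ 0]) simp_all
  show "0 \<le> arccos (cmod z)" "arccos (cmod z) \<le> pi/2"
    using arccos_lbound[of "cmod z"] arccos_le_pi2[of "cmod z"] r1 norm_ge_zero[of z] by simp_all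
  have "cos (arccos (cmod z)) = cmod z"
    using r0 r1 by (rule cos_arccos)
  then show "z = rcis (cos (arccos (cmod z))) (Arg z)"
    by (simp add: rcis_cmod_Arg)
  have "sin (arccos (cmod z)) = sqrt (1 - (cmod z)\<^sup>2)" using r0 r1 by (rule sin_arccos)
  also have "1 - (cmod z)\<^sup>2 = (cmod w)\<^sup>2" using assms by simp
  also have "sqrt \<dots> = cmod w" by simp
  finally show "w = rcis (sin (arccos (cmod z))) (Arg w)" by (simp add: rcis_cmod_Arg)
qed

lemma SU2_euler_angles:
  assumes "h \<in> SU2"
  obtains a b c where "0 \<le> a" "a \<le> pi" "0 \<le> b" "b < 2*pi" "h = exp_p2 (-b) ** exp_p1 a ** exp_p2 c"
proof -
  obtain \<alpha> \<beta> where h: "h = mat2 \<alpha> \<beta> (-cnj \<beta>) (cnj \<alpha>)" and n: "\<alpha>*cnj \<alpha> + \<beta>*cnj \<beta> = 1"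
    using assms SU2_iff_mat2 by blast
  have "(Re \<alpha>)\<^sup>2 + (Im \<alpha>)\<^sup>2 + ((Re \<beta>)\<^sup>2 + (Im \<beta>)\<^sup>2) = 1"
    using arg_cong[OF n, of Re] unfolding complex_mult_cnj by simp
  then have "(cmod (Complex (Re \<alpha>) (Im \<beta>)))\<^sup>2 + (cmod (Complex (Re \<beta>) (Im \<alpha>)))\<^sup>2 = 1"
    by (simp add: cmod_power2)
  then obtain A \<phi> \<psi> where A: "0 \<le> A" "A \<le> pi/2"
    and z: "Complex (Re \<alpha>) (Im \<beta>) = rcis (cos A) \<phi>"
    and w: "Complex (Re \<beta>) (Im \<alpha>) = rcis (sin A) \<psi>"
    by (rule unit_pair_polar)
  \<comment> \<open>b = \<psi> - \<phi> is brought into [0, 2\<pi>) by shifting \<phi> by a multiple of 2\<pi>\<close>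
  define j where "j = \<lfloor>(\<psi> - \<phi>) / (2*pi)\<rfloor>"
  define b where "b = \<psi> - \<phi> - 2*pi * of_int j"
  define c where "c = \<psi> + \<phi> + 2*pi * of_int j"
  have "2*pi * of_int j \<le> \<psi> - \<phi>" "\<psi> - \<phi> < 2*pi * (of_int j + 1)"
    using floor_divide_lower[of "2*pi" "\<psi> - \<phi>"] floor_divide_upper[of "2*pi" "\<psi> - \<phi>"]
    by (simp_all add: j_def mult.commute)
  then have b: "0 \<le> b" "b < 2*pi" by (simp_all add: b_def algebra_simps)
  have "c/2 - b/2 = \<phi> + 2*pi * of_int j" "b/2 + c/2 = \<psi>"
    by (simp_all add: b_def c_def field_simps)
  then have "h = exp_p2 (-b) ** exp_p1 (2*A) ** exp_p2 c"
    using exp_euler_angles[of "b/2" A "c/2"] z w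
    by (simp add: h mat2_eq_iff complex_eq_iff cos_add sin_add)
  with A b show thesis by (intro that[of "2*A" b c]) auto
qed

section \<open>The classes of L(4,1) as deck orbits\<close>

abbreviation deck :: "int \<Rightarrow> cmat" where
  "deck k \<equiv> exp_p2 (of_int k * pi)"

lemma deck_add: "deck k ** deck m = deck (k + m)"
  by (simp add: exp_p2_add distrib_right)

lemma deck_mod_4: "deck k = deck (k mod 4)"
proof -
  have "of_int (4 * (k div 4)) * pi / 2 = 2*pi * of_int (k div 4)" by simp
  then have "deck (4 * (k div 4)) = mat 1"
    unfolding exp_p2_def mat_1_eq_mat2 by (simp only: cos_int_2pin sin_int_2pin) simp
  then show ?thesis using deck_add[of "4 * (k div 4)" "k mod 4"] by simp
qed

lemma lens_rel_iff_deck: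
  assumes "g \<in> SU2"
  shows "lens_rel g x \<longleftrightarrow> (\<exists>k. x = g ** deck k)"
proof
  assume "lens_rel g x"
  then obtain a b c1 c2 k where g: "g = exp_p2 (-b) ** exp_p1 a ** exp_p2 c1"
    and x: "x = exp_p2 (-b) ** exp_p1 a ** exp_p2 c2" and k: "c1 - c2 = of_int k * pi"
    unfolding lens_rel_def by blast
  have "c2 = c1 + of_int (-k) * pi" using k by simp
  then have "exp_p2 c2 = exp_p2 c1 ** deck (-k)" by (simp add: exp_p2_add)
  then have "x = g ** deck (-k)" by (simp add: x g matrix_mul_assoc)
  then show "\<exists>k. x = g ** deck k" ..
next
  assume "\<exists>k. x = g ** deck k"
  then obtain k where x: "x = g ** deck k" ..
  obtain a b c where abc: "0 \<le> a" "a \<le> pi" "0 \<le> b" "b < 2*pi"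
    and g: "g = exp_p2 (-b) ** exp_p1 a ** exp_p2 c"
    using SU2_euler_angles[OF assms] by blast
  have "x = exp_p2 (-b) ** exp_p1 a ** exp_p2 (c + of_int k * pi)"
    by (simp add: x g exp_p2_add flip: matrix_mul_assoc)
  moreover have "c - (c + of_int k * pi) = of_int (-k) * pi" by simp
  ultimately show "lens_rel g x" unfolding lens_rel_def using abc g by blast
qed

lemma cls_eq_deck_orbit: "g \<in> SU2 \<Longrightarrow> cls g = range (\<lambda>k. g ** deck k)"
  unfolding cls_def by (auto simp: lens_rel_iff_deck SU2_mult exp_p2_SU2)

lemma cls_subset_SU2: "cls g \<subseteq> SU2"
  by (auto simp: cls_def)

lemma self_in_cls: "g \<in> SU2 \<Longrightarrow> g \<in> cls g"
  using deck_add[of 0 0] exp_p2_0 by (auto simp: cls_eq_deck_orbit intro: range_eqI[of _ _ 0])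

lemma cls_mult_deck: assumes "g \<in> SU2" shows "cls (g ** deck k) = cls g"
proof -
  have "(\<lambda>m. g ** deck k ** deck m) = (\<lambda>m. g ** deck m) \<circ> (\<lambda>m. k + m)"
    by (simp add: fun_eq_iff deck_add flip: matrix_mul_assoc)
  then have "cls (g ** deck k) = (\<lambda>m. g ** deck m) ` range (\<lambda>m. k + m)"
    using assms by (simp only: cls_eq_deck_orbit SU2_mult exp_p2_SU2 image_comp)
  also have "range (\<lambda>m::int. k + m) = UNIV"
    by (rule surjI[of _ "\<lambda>m. m - k"]) simp
  finally show ?thesis using assms by (simp add: cls_eq_deck_orbit)
qed

lemma cls_eq: assumes "g \<in> SU2" "x \<in> cls g" shows "cls x = cls g"
proof -
  from assms obtain k where "x = g ** deck k" by (auto simp: cls_eq_deck_orbit)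
  with assms(1) show ?thesis by (simp add: cls_mult_deck)
qed

lemma finite_cls: assumes "g \<in> SU2" shows "finite (cls g)"
proof -
  have "cls g \<subseteq> (\<lambda>k. g ** deck k) ` {0..3}"
  proof
    fix x assume "x \<in> cls g"
    then obtain k where "x = g ** deck (k mod 4)"
      using assms deck_mod_4 by (auto simp: cls_eq_deck_orbit)
    then show "x \<in> (\<lambda>k. g ** deck k) ` {0..3}" by force
  qed
  then show ?thesis by (rule finite_subset) simp
qed

lemma p1_mult_exp_p2: "p1 ** exp_p2 \<theta> = exp_p2 (-\<theta>) ** p1"
  by (simp add: p1_def exp_p2_def mat2_mult mat2_eq_iff)

lemma p2_mult_exp_p2: "p2 ** exp_p2 \<theta> = exp_p2 \<theta> ** p2"
  by (simp add: p2_def exp_p2_def mat2_mult mat2_eq_iff algebra_simps)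

text \<open>Conjugation by deck k fixes p2 and maps p1 to \<plusminus>p1, so right translation by deck k
  preserves the horizontal distribution and its metric.\<close>

lemma p1_mult_deck: "p1 ** deck k = cos (of_int k * pi) *\<^sub>R (deck k ** p1)"
proof -
  have "deck (-2*k) = cos (of_int k * pi) *\<^sub>R mat 1"
    by (simp add: exp_p2_def mat_1_eq_mat2 mat2_scaleR mat2_eq_iff sin_times_pi_eq_0 complex_eq_iff)
  then have "deck (-k) = cos (of_int k * pi) *\<^sub>R deck k"
    using deck_add[of k "-2*k"] by (simp add: matrix_scalar_ac)
  then show ?thesis
    by (simp add: p1_mult_exp_p2 scalar_matrix_assoc)
qed

section \<open>Horizontal curves\<close>

lemma horizontal_vector_mat2:
  "u *\<^sub>R p1 + v *\<^sub>R p2 = mat2 0 (Complex (u/2) (v/2)) (Complex (-u/2) (v/2)) 0"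
  by (simp add: p1_def p2_def mat2_scaleR mat2_add mat2_eq_iff complex_eq_iff)

lemma norm_horizontal_vector:
  "x \<in> SU2 \<Longrightarrow> norm (x ** (u *\<^sub>R p1 + v *\<^sub>R p2)) = sqrt ((u\<^sup>2 + v\<^sup>2) / 2)"
  by (simp add: norm_mult_SU2_left horizontal_vector_mat2 norm_mat2 cmod_power2 power_divide)

lemma horizontal_onI:
  assumes "a \<le> b" and SU2: "\<And>t. t \<in> {a..b} \<Longrightarrow> \<gamma> t \<in> SU2"
    and deriv: "\<And>t. t \<in> {a..b} \<Longrightarrow>
      (\<gamma> has_vector_derivative (\<gamma> t ** (u t *\<^sub>R p1 + v t *\<^sub>R p2))) (at t within {a..b})"
    and speed: "\<And>t. t \<in> {a..b} \<Longrightarrow> sqrt (((u t)\<^sup>2 + (v t)\<^sup>2) / 2) \<le> M"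
  shows "horizontal_on a b \<gamma> u v"
proof -
  have "M-lipschitz_on {a..b} \<gamma>"
  proof (rule bounded_derivative_imp_lipschitz)
    fix t assume t: "t \<in> {a..b}"
    show "(\<gamma> has_derivative (\<lambda>h. h *\<^sub>R (\<gamma> t ** (u t *\<^sub>R p1 + v t *\<^sub>R p2)))) (at t within {a..b})"
      using deriv[OF t] by (simp add: has_vector_derivative_def)
    show "onorm (\<lambda>h. h *\<^sub>R (\<gamma> t ** (u t *\<^sub>R p1 + v t *\<^sub>R p2))) \<le> M"
      using speed[OF t] by (simp add: onorm_scaleR_left bounded_linear_ident onorm_id
                                       norm_horizontal_vector SU2[OF t])
  next
    have "sqrt (((u a)\<^sup>2 + (v a)\<^sup>2) / 2) \<le> M" using speed \<open>a \<le> b\<close> by simp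
    then show "0 \<le> M" by (rule order_trans[rotated]) simp
  qed simp
  with assms show ?thesis
    unfolding horizontal_on_def by (intro conjI exI[of _ M] exI[of _ "{}"]) auto
qed

lemma lipschitz_on_mult_SU2_left:
  fixes \<gamma> :: "'a::metric_space \<Rightarrow> cmat"
  assumes "C-lipschitz_on S \<gamma>" "z \<in> SU2"
  shows "C-lipschitz_on S (\<lambda>t. z ** \<gamma> t)"
proof (rule lipschitz_onI)
  fix x y assume "x \<in> S" "y \<in> S"
  have "dist (z ** \<gamma> x) (z ** \<gamma> y) = dist (\<gamma> x) (\<gamma> y)"
    using assms(2) by (simp add: dist_norm norm_mult_SU2_left flip: matrix_diff_ldistrib)
  also have "\<dots> \<le> C * dist x y" using assms(1) \<open>x \<in> S\<close> \<open>y \<in> S\<close> by (rule lipschitz_onD)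
  finally show "dist (z ** \<gamma> x) (z ** \<gamma> y) \<le> C * dist x y" .
qed (rule lipschitz_on_nonneg[OF assms(1)])

lemma lipschitz_on_mult_SU2_right:
  fixes \<gamma> :: "'a::metric_space \<Rightarrow> cmat"
  assumes "C-lipschitz_on S \<gamma>" "z \<in> SU2"
  shows "C-lipschitz_on S (\<lambda>t. \<gamma> t ** z)"
proof (rule lipschitz_onI)
  fix x y assume "x \<in> S" "y \<in> S"
  have "dist (\<gamma> x ** z) (\<gamma> y ** z) = dist (\<gamma> x) (\<gamma> y)"
    using assms(2) by (simp add: dist_norm norm_mult_SU2_right flip: matrix_diff_rdistrib)
  also have "\<dots> \<le> C * dist x y" using assms(1) \<open>x \<in> S\<close> \<open>y \<in> S\<close> by (rule lipschitz_onD)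
  finally show "dist (\<gamma> x ** z) (\<gamma> y ** z) \<le> C * dist x y" .
qed (rule lipschitz_on_nonneg[OF assms(1)])

lemma horizontal_on_mult_left:
  assumes "horizontal_on a b \<gamma> u v" "z \<in> SU2"
  shows "horizontal_on a b (\<lambda>t. z ** \<gamma> t) u v"
proof -
  from assms(1) obtain C N where "a \<le> b" "\<forall>t\<in>{a..b}. \<gamma> t \<in> SU2" "C-lipschitz_on {a..b} \<gamma>"
    "N \<in> null_sets lborel" and deriv:
    "\<forall>t\<in>{a..b} - N. (\<gamma> has_vector_derivative (\<gamma> t ** (u t *\<^sub>R p1 + v t *\<^sub>R p2))) (at t within {a..b})"
    unfolding horizontal_on_def by blast
  moreover have "((\<lambda>t. z ** \<gamma> t) has_vector_derivative (z ** \<gamma> t ** (u t *\<^sub>R p1 + v t *\<^sub>R p2)))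
      (at t within {a..b})" if "t \<in> {a..b} - N" for t
    using bounded_linear.has_vector_derivative[OF bounded_linear_matrix_mult_left deriv[rule_format, OF that]]
    by (simp add: matrix_mul_assoc)
  ultimately show ?thesis
    unfolding horizontal_on_def using assms(2) SU2_mult lipschitz_on_mult_SU2_left by blast
qed

lemma horizontal_on_mult_deck:
  assumes "horizontal_on a b \<gamma> u v"
  shows "horizontal_on a b (\<lambda>t. \<gamma> t ** deck k) (\<lambda>t. cos (of_int k * pi) * u t) v"
proof -
  from assms obtain C N where "a \<le> b" "\<forall>t\<in>{a..b}. \<gamma> t \<in> SU2" "C-lipschitz_on {a..b} \<gamma>"
    "N \<in> null_sets lborel" and deriv:
    "\<forall>t\<in>{a..b} - N. (\<gamma> has_vector_derivative (\<gamma> t ** (u t *\<^sub>R p1 + v t *\<^sub>R p2))) (at t within {a..b})"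
    unfolding horizontal_on_def by blast
  have ctrl: "(x *\<^sub>R p1 + y *\<^sub>R p2) ** deck k = deck k ** ((cos (of_int k * pi) * x) *\<^sub>R p1 + y *\<^sub>R p2)"
    for x y
    by (simp add: matrix_add_rdistrib matrix_add_ldistrib p1_mult_deck p2_mult_exp_p2
        matrix_scalar_ac flip: scalar_matrix_assoc)
  have "((\<lambda>t. \<gamma> t ** deck k) has_vector_derivative
      (\<gamma> t ** deck k ** ((cos (of_int k * pi) * u t) *\<^sub>R p1 + v t *\<^sub>R p2))) (at t within {a..b})"
    if "t \<in> {a..b} - N" for t
    using bounded_linear.has_vector_derivative[OF bounded_linear_matrix_mult_right[of "deck k"]
        deriv[rule_format, OF that]]
    by (simp add: ctrl flip: matrix_mul_assoc)
  with \<open>a \<le> b\<close> \<open>\<forall>t\<in>{a..b}. \<gamma> t \<in> SU2\<close> \<open>C-lipschitz_on {a..b} \<gamma>\<close> \<open>N \<in> null_sets lborel\<close>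
  show ?thesis
    unfolding horizontal_on_def using SU2_mult exp_p2_SU2 lipschitz_on_mult_SU2_right by blast
qed

lemma hlength_cos_int_pi: "hlength a b (\<lambda>t. cos (of_int k * pi) * u t) v = hlength a b u v"
proof -
  have "sin (of_int k * pi) = 0" by (simp add: sin_times_pi_eq_0)
  then have "(cos (of_int k * pi))\<^sup>2 = 1" by (simp add: cos_squared_eq)
  then show ?thesis by (simp add: hlength_def power_mult_distrib)
qed

text \<open>The generators are written as control vectors (1, 0) and (0, 1) to match
  the next lemma literally.\<close>

lemma exp_p1_eq: "exp_p1 \<theta> = cos (\<theta>/2) *\<^sub>R mat 1 + sin (\<theta>/2) *\<^sub>R (2 *\<^sub>R (1 *\<^sub>R p1 + 0 *\<^sub>R p2))"
  by (simp add: exp_p1_def p1_def mat_1_eq_mat2 mat2_scaleR mat2_add mat2_eq_iff complex_eq_iff)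

lemma exp_p2_eq: "exp_p2 \<theta> = cos (\<theta>/2) *\<^sub>R mat 1 + sin (\<theta>/2) *\<^sub>R (2 *\<^sub>R (0 *\<^sub>R p1 + 1 *\<^sub>R p2))"
  by (simp add: exp_p2_def p2_def mat_1_eq_mat2 mat2_scaleR mat2_add mat2_eq_iff complex_eq_iff)

lemma horizontal_on_one_parameter:
  fixes E :: "real \<Rightarrow> cmat" and c1 c2 :: real
  defines "P \<equiv> c1 *\<^sub>R p1 + c2 *\<^sub>R p2"
  assumes x: "x \<in> SU2" and "a \<le> b" and E_SU2: "\<And>\<theta>. E \<theta> \<in> SU2"
    and E: "\<And>\<theta>. E \<theta> = cos (\<theta>/2) *\<^sub>R mat 1 + sin (\<theta>/2) *\<^sub>R (2 *\<^sub>R P)"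
    and P_sq: "P ** P = (-1/4) *\<^sub>R mat 1"
  shows "horizontal_on a b (\<lambda>t. x ** E (w * (t - a))) (\<lambda>t. w * c1) (\<lambda>t. w * c2)"
proof (rule horizontal_onI)
  fix t
  let ?\<theta> = "w * (t - a)"
  have "(w * c1) *\<^sub>R p1 + (w * c2) *\<^sub>R p2 = w *\<^sub>R P"
    by (simp add: P_def scaleR_add_right)
  then have "E ?\<theta> ** ((w * c1) *\<^sub>R p1 + (w * c2) *\<^sub>R p2) = w *\<^sub>R (E ?\<theta> ** P)"
    by (simp add: matrix_scalar_ac scalar_matrix_assoc)
  also have "E ?\<theta> ** P = cos (?\<theta>/2) *\<^sub>R P - (sin (?\<theta>/2) / 2) *\<^sub>R mat 1"
    by (simp add: E matrix_add_rdistrib P_sq flip: scalar_matrix_assoc)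
  finally have "E ?\<theta> ** ((w * c1) *\<^sub>R p1 + (w * c2) *\<^sub>R p2)
      = (w/2) *\<^sub>R (- sin (?\<theta>/2) *\<^sub>R mat 1 + cos (?\<theta>/2) *\<^sub>R (2 *\<^sub>R P))"
    by (simp add: algebra_simps)
  moreover have "((\<lambda>t. E (w * (t - a))) has_vector_derivative
      (w/2) *\<^sub>R (- sin (?\<theta>/2) *\<^sub>R mat 1 + cos (?\<theta>/2) *\<^sub>R (2 *\<^sub>R P))) (at t within {a..b})"
    unfolding E by (auto intro!: derivative_eq_intros simp: algebra_simps)
  ultimately show "((\<lambda>t. x ** E (w * (t - a))) has_vector_derivative
      (x ** E ?\<theta> ** ((w * c1) *\<^sub>R p1 + (w * c2) *\<^sub>R p2))) (at t within {a..b})"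
    using bounded_linear.has_vector_derivative[OF bounded_linear_matrix_mult_left]
    by (simp flip: matrix_mul_assoc)
  show "x ** E ?\<theta> \<in> SU2" using x E_SU2 by (rule SU2_mult)
qed (use \<open>a \<le> b\<close> in auto)

lemma horizontal_on_exp_p1:
  assumes "x \<in> SU2" "a \<le> b"
  shows "horizontal_on a b (\<lambda>t. x ** exp_p1 (w * (t - a))) (\<lambda>t. w) (\<lambda>t. 0)"
proof -
  have "(1 *\<^sub>R p1 + 0 *\<^sub>R p2) ** (1 *\<^sub>R p1 + 0 *\<^sub>R p2) = (-1/4) *\<^sub>R mat 1"
    by (simp add: p1_def mat2_mult mat2_scaleR mat_1_eq_mat2 mat2_eq_iff complex_eq_iff)
  from horizontal_on_one_parameter[OF assms exp_p1_SU2 exp_p1_eq this] show ?thesis by simp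
qed

lemma horizontal_on_exp_p2:
  assumes "x \<in> SU2" "a \<le> b"
  shows "horizontal_on a b (\<lambda>t. x ** exp_p2 (w * (t - a))) (\<lambda>t. 0) (\<lambda>t. w)"
proof -
  have "(0 *\<^sub>R p1 + 1 *\<^sub>R p2) ** (0 *\<^sub>R p1 + 1 *\<^sub>R p2) = (-1/4) *\<^sub>R mat 1"
    by (simp add: p2_def mat2_mult mat2_scaleR mat_1_eq_mat2 mat2_eq_iff complex_eq_iff)
  from horizontal_on_one_parameter[OF assms exp_p2_SU2 exp_p2_eq this] show ?thesis by simp
qed

section \<open>Lengths of horizontal curves\<close>

lemma tendsto_difference_quotient_right:
  fixes f :: "real \<Rightarrow> 'a::real_normed_vector"
  assumes deriv: "(f has_vector_derivative D) (at t within {a..b})" and "a \<le> t" "t < b"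
  shows "(\<lambda>n. real (Suc n) *\<^sub>R (f (t + 1 / real (Suc n)) - f t)) \<longlonglongrightarrow> D"
proof -
  define h where "h n = 1 / real (Suc n)" for n
  have h_pos: "0 < h n" for n by (simp add: h_def)
  have "h \<longlonglongrightarrow> 0" unfolding h_def by (rule LIMSEQ_Suc[OF lim_const_over_n])
  then have h_small: "eventually (\<lambda>n. h n < b - t) sequentially"
    using \<open>t < b\<close> by (simp add: order_tendstoD(2))
  have "filterlim (\<lambda>n. t + h n) (at t within {a..b}) sequentially"
    unfolding filterlim_at
  proof
    show "\<forall>\<^sub>F n in sequentially. t + h n \<in> {a..b} \<and> t + h n \<noteq> t"
      using h_small by eventually_elim (smt (verit) h_pos \<open>a \<le> t\<close> atLeastAtMost_iff)
    show "((\<lambda>n. t + h n) \<longlongrightarrow> t) sequentially"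
      using tendsto_add[OF tendsto_const \<open>h \<longlonglongrightarrow> 0\<close>] by simp
  qed
  moreover have "((\<lambda>y. (1 / norm (y - t)) *\<^sub>R (f y - (f t + (y - t) *\<^sub>R D))) \<longlongrightarrow> 0) (at t within {a..b})"
    using deriv by (simp add: has_vector_derivative_def has_derivative_within)
  ultimately have "(\<lambda>n. (1 / norm (h n)) *\<^sub>R (f (t + h n) - (f t + h n *\<^sub>R D))) \<longlonglongrightarrow> 0"
    by (auto dest: filterlim_compose simp: o_def)
  moreover have "(1 / norm (h n)) *\<^sub>R (f (t + h n) - (f t + h n *\<^sub>R D))
      = real (Suc n) *\<^sub>R (f (t + 1 / real (Suc n)) - f t) - D" for n
    by (simp add: h_def algebra_simps)
  ultimately show ?thesis by (simp add: Lim_null[symmetric])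
qed

lemma vector_derivative_measurable_on:
  fixes \<gamma> :: "real \<Rightarrow> 'a::euclidean_space"
  assumes "continuous_on {a..b} \<gamma>" and "negligible N"
    and deriv: "\<And>t. t \<in> {a..b} - N \<Longrightarrow> (\<gamma> has_vector_derivative \<gamma>' t) (at t within {a..b})"
  shows "\<gamma>' measurable_on {a..b}"
proof -
  \<comment> \<open>Extended constantly beyond [a, b], \<gamma> has forward difference quotients that are continuous on
    [a, b]; they converge to \<gamma>' off N \<union> {b}.\<close>
  define G where "G s = \<gamma> (clamp a b s)" for s
  have G_cont: "continuous_on UNIV G"
    unfolding G_def using assms(1) by (intro clamp_continuous_on) simp
  define q where "q n t = real (Suc n) *\<^sub>R (G (t + 1 / real (Suc n)) - G t)" for n t
  have q_meas: "q n measurable_on {a..b}" for n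
  proof -
    have "continuous_on {a..b} (q n)" unfolding q_def
      by (intro continuous_intros continuous_on_compose2[OF G_cont]) auto
    then show ?thesis
      by (simp add: measurable_on_iff_borel_measurable continuous_imp_measurable_on_sets_lebesgue)
  qed
  have q_lim: "(\<lambda>n. q n t) \<longlonglongrightarrow> \<gamma>' t" if t: "t \<in> {a..b} - (N \<union> {b})" for t
  proof -
    have "(G has_vector_derivative \<gamma>' t) (at t within {a..b})"
      using t by (intro has_vector_derivative_transform[OF _ _ deriv]) (auto simp: G_def)
    then show ?thesis
      unfolding q_def by (rule tendsto_difference_quotient_right) (use t in auto)
  qed
  have "negligible (N \<union> {b})" using \<open>negligible N\<close> by simp
  with q_meas show ?thesis using q_lim by (rule measurable_on_limit)
qed

lemma lipschitz_on_clamp: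
  fixes \<gamma> :: "real \<Rightarrow> 'a::metric_space"
  assumes "C-lipschitz_on {a..b} \<gamma>" "a \<le> b"
  shows "C-lipschitz_on UNIV (\<lambda>s. \<gamma> (clamp a b s))"
proof (rule lipschitz_onI)
  fix s s' :: real
  have clamp_in: "clamp a b x \<in> {a..b}" for x
    using clamp_in_interval[of a b x] assms(2) by simp
  have "dist (\<gamma> (clamp a b s)) (\<gamma> (clamp a b s')) \<le> C * dist (clamp a b s) (clamp a b s')"
    using assms(1) clamp_in clamp_in by (rule lipschitz_onD)
  also have "\<dots> \<le> C * dist s s'"
    using dist_clamps_le_dist_args[of a b s s'] lipschitz_on_nonneg[OF assms(1)] assms(2)
    by (intro mult_left_mono) auto
  finally show "dist (\<gamma> (clamp a b s)) (\<gamma> (clamp a b s')) \<le> C * dist s s'" .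
qed (rule lipschitz_on_nonneg[OF assms(1)])

lemma norm_vector_derivative_le_lipschitz:
  fixes \<gamma> :: "real \<Rightarrow> 'a::real_normed_vector"
  assumes L: "C-lipschitz_on {a..b} \<gamma>"
    and deriv: "(\<gamma> has_vector_derivative D) (at t within {a..b})" and "a \<le> t" "t < b"
  shows "norm D \<le> C"
proof -
  define G where "G s = \<gamma> (clamp a b s)" for s
  have G_lip: "C-lipschitz_on UNIV G"
    unfolding G_def using L by (rule lipschitz_on_clamp) (use assms in simp)
  have "(G has_vector_derivative D) (at t within {a..b})"
    using assms by (intro has_vector_derivative_transform[OF _ _ deriv]) (auto simp: G_def)
  then have "(\<lambda>n. norm (real (Suc n) *\<^sub>R (G (t + 1 / real (Suc n)) - G t))) \<longlonglongrightarrow> norm D"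
    using assms by (intro tendsto_norm tendsto_difference_quotient_right) auto
  moreover have "norm (real (Suc n) *\<^sub>R (G (t + 1 / real (Suc n)) - G t)) \<le> C" for n
  proof -
    have "norm (real (Suc n) *\<^sub>R (G (t + 1 / real (Suc n)) - G t))
        = real (Suc n) * dist (G (t + 1 / real (Suc n))) (G t)"
      by (simp add: dist_norm)
    also have "\<dots> \<le> real (Suc n) * (C * dist (t + 1 / real (Suc n)) t)"
      using G_lip by (intro mult_left_mono lipschitz_onD) auto
    finally show ?thesis by (simp add: dist_real_def)
  qed
  ultimately show ?thesis by (intro LIMSEQ_le_const2) auto
qed

lemma lipschitz_derivative_absolutely_integrable:
  fixes \<gamma> :: "real \<Rightarrow> 'a::euclidean_space"
  assumes L: "C-lipschitz_on {a..b} \<gamma>" and "negligible N"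
    and deriv: "\<And>t. t \<in> {a..b} - N \<Longrightarrow> (\<gamma> has_vector_derivative \<gamma>' t) (at t within {a..b})"
  shows "\<gamma>' absolutely_integrable_on {a..b}"
proof -
  define N' where "N' = N \<union> {b}"
  have "negligible N'" using \<open>negligible N\<close> by (simp add: N'_def)
  have "\<gamma>' measurable_on {a..b}"
    using lipschitz_on_continuous_on[OF L] \<open>negligible N\<close> deriv by (rule vector_derivative_measurable_on)
  then have "(\<lambda>t. if t \<in> N' then 0 else \<gamma>' t) measurable_on {a..b}"
    by (rule measurable_on_spike[OF _ \<open>negligible N'\<close>]) simp
  moreover have "norm (if t \<in> N' then 0 else \<gamma>' t) \<le> C" if "t \<in> {a..b}" for t
    using that lipschitz_on_nonneg[OF L] norm_vector_derivative_le_lipschitz[OF L deriv]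
    by (auto simp: N'_def)
  ultimately have "(\<lambda>t. if t \<in> N' then 0 else \<gamma>' t) absolutely_integrable_on {a..b}"
    by (intro measurable_bounded_by_integrable_imp_absolutely_integrable[where g="\<lambda>_. C"])
       (auto simp: measurable_on_iff_borel_measurable[symmetric])
  then show ?thesis
    by (rule absolutely_integrable_spike[OF _ \<open>negligible N'\<close>]) simp
qed

lemma horizontal_on_speed_integrable:
  assumes "horizontal_on a b \<gamma> u v"
  shows "(\<lambda>t. sqrt ((u t)\<^sup>2 + (v t)\<^sup>2)) integrable_on {a..b}"
proof -
  from assms obtain C N where SU2: "\<forall>t\<in>{a..b}. \<gamma> t \<in> SU2" and L: "C-lipschitz_on {a..b} \<gamma>"
    and N: "N \<in> null_sets lborel" and deriv:
    "\<forall>t\<in>{a..b} - N. (\<gamma> has_vector_derivative (\<gamma> t ** (u t *\<^sub>R p1 + v t *\<^sub>R p2))) (at t within {a..b})"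
    unfolding horizontal_on_def by blast
  have "negligible N" using N by (simp add: negligible_iff_null_sets null_sets_completionI)
  with L deriv have "(\<lambda>t. \<gamma> t ** (u t *\<^sub>R p1 + v t *\<^sub>R p2)) absolutely_integrable_on {a..b}"
    by (intro lipschitz_derivative_absolutely_integrable) auto
  then have "(\<lambda>t. sqrt 2 * norm (\<gamma> t ** (u t *\<^sub>R p1 + v t *\<^sub>R p2))) integrable_on {a..b}"
    by (simp add: absolutely_integrable_on_def)
  then show ?thesis
    by (rule integrable_eq) (simp add: SU2 norm_horizontal_vector flip: real_sqrt_mult)
qed

text \<open>No integrability is needed: a non-integrable speed has integral 0.\<close>

lemma hlength_nonneg: "0 \<le> hlength a b u v"
  unfolding hlength_def
  by (cases "(\<lambda>t. sqrt ((u t)\<^sup>2 + (v t)\<^sup>2)) integrable_on {a..b}")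
     (simp_all add: integral_nonneg not_integrable_integral)

lemma has_vector_derivative_join_left:
  assumes "(f has_vector_derivative D) (at t within {a..b})" "a \<le> t" "t < b" "b \<le> c"
  shows "((\<lambda>s. if s \<le> b then f s else g s) has_vector_derivative D) (at t within {a..c})"
proof -
  have "at t within {a..c} = at t within {a..b}"
    by (rule at_within_nhd[of t "{..<b}"]) (use assms in auto)
  moreover have "((\<lambda>s. if s \<le> b then f s else g s) has_vector_derivative D) (at t within {a..b})"
    using assms(1) by (rule has_vector_derivative_transform_within[where d=1]) (use assms in auto)
  ultimately show ?thesis by simp
qed

lemma has_vector_derivative_join_right:
  assumes "(g has_vector_derivative D) (at t within {b..c})" "a \<le> b" "b < t" "t \<le> c" "f b = g b"
  shows "((\<lambda>s. if s \<le> b then f s else g s) has_vector_derivative D) (at t within {a..c})"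
proof -
  have "at t within {a..c} = at t within {b..c}"
    by (rule at_within_nhd[of t "{b<..}"]) (use assms in auto)
  moreover have "((\<lambda>s. if s \<le> b then f s else g s) has_vector_derivative D) (at t within {b..c})"
    using assms(1) by (rule has_vector_derivative_transform_within[where d=1]) (use assms in auto)
  ultimately show ?thesis by simp
qed

lemma horizontal_on_join:
  assumes h1: "horizontal_on a b \<gamma> u v" and h2: "horizontal_on b c \<delta> u' v'" and "\<gamma> b = \<delta> b"
  shows "horizontal_on a c (\<lambda>t. if t \<le> b then \<gamma> t else \<delta> t)
           (\<lambda>t. if t \<le> b then u t else u' t) (\<lambda>t. if t \<le> b then v t else v' t)"
proof -
  let ?\<eta> = "\<lambda>t. if t \<le> b then \<gamma> t else \<delta> t"
  let ?u = "\<lambda>t. if t \<le> b then u t else u' t"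
  let ?v = "\<lambda>t. if t \<le> b then v t else v' t"
  from h1 obtain C1 N1 where "a \<le> b" "\<forall>t\<in>{a..b}. \<gamma> t \<in> SU2" "C1-lipschitz_on {a..b} \<gamma>"
    "N1 \<in> null_sets lborel" and d1:
    "\<forall>t\<in>{a..b} - N1. (\<gamma> has_vector_derivative (\<gamma> t ** (u t *\<^sub>R p1 + v t *\<^sub>R p2))) (at t within {a..b})"
    unfolding horizontal_on_def by blast
  from h2 obtain C2 N2 where "b \<le> c" "\<forall>t\<in>{b..c}. \<delta> t \<in> SU2" "C2-lipschitz_on {b..c} \<delta>"
    "N2 \<in> null_sets lborel" and d2:
    "\<forall>t\<in>{b..c} - N2. (\<delta> has_vector_derivative (\<delta> t ** (u' t *\<^sub>R p1 + v' t *\<^sub>R p2))) (at t within {b..c})"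
    unfolding horizontal_on_def by blast
  define N where "N = N1 \<union> N2 \<union> {b}"
  have deriv: "(?\<eta> has_vector_derivative (?\<eta> t ** (?u t *\<^sub>R p1 + ?v t *\<^sub>R p2))) (at t within {a..c})"
    if t: "t \<in> {a..c} - N" for t
  proof (cases "t < b")
    case True
    with t d1 have "(\<gamma> has_vector_derivative (\<gamma> t ** (u t *\<^sub>R p1 + v t *\<^sub>R p2))) (at t within {a..b})"
      by (auto simp: N_def)
    then show ?thesis
      using t True \<open>b \<le> c\<close> by (simp add: has_vector_derivative_join_left)
  next
    case False
    with t have "b < t" by (auto simp: N_def)
    with t d2 have "(\<delta> has_vector_derivative (\<delta> t ** (u' t *\<^sub>R p1 + v' t *\<^sub>R p2))) (at t within {b..c})"
      by (auto simp: N_def)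
    then show ?thesis
      using t \<open>b < t\<close> \<open>a \<le> b\<close> \<open>\<gamma> b = \<delta> b\<close> by (simp add: has_vector_derivative_join_right)
  qed
  have "(max C1 C2)-lipschitz_on {a..c} ?\<eta>"
    using \<open>C1-lipschitz_on {a..b} \<gamma>\<close> \<open>C2-lipschitz_on {b..c} \<delta>\<close> \<open>\<gamma> b = \<delta> b\<close>
    by (rule lipschitz_on_concat_max)
  moreover have "N \<in> null_sets lborel"
    unfolding N_def using \<open>N1 \<in> null_sets lborel\<close> \<open>N2 \<in> null_sets lborel\<close>
    by (intro null_sets.Un) (simp_all add: finite_imp_null_set_lborel)
  ultimately show ?thesis
    unfolding horizontal_on_def using \<open>a \<le> b\<close> \<open>b \<le> c\<close> \<open>\<forall>t\<in>{a..b}. \<gamma> t \<in> SU2\<close>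
      \<open>\<forall>t\<in>{b..c}. \<delta> t \<in> SU2\<close> deriv
    by (intro conjI exI[of _ "max C1 C2"] exI[of _ N]) auto
qed

lemma hlength_join:
  assumes "horizontal_on a b \<gamma> u v" "horizontal_on b c \<delta> u' v'"
  shows "hlength a c (\<lambda>t. if t \<le> b then u t else u' t) (\<lambda>t. if t \<le> b then v t else v' t)
       = hlength a b u v + hlength b c u' v'"
proof -
  let ?f = "\<lambda>t. sqrt ((if t \<le> b then u t else u' t)\<^sup>2 + (if t \<le> b then v t else v' t)\<^sup>2)"
  have ab: "a \<le> b" and bc: "b \<le> c" using assms by (simp_all add: horizontal_on_def)
  have "?f integrable_on {a..b}"
    by (rule integrable_spike[OF horizontal_on_speed_integrable[OF assms(1)] negligible_empty]) auto
  moreover have "?f integrable_on {b..c}"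
    by (rule integrable_spike[OF horizontal_on_speed_integrable[OF assms(2)], of "{b}"]) auto
  ultimately have "?f integrable_on {a..c}"
    by (rule Henstock_Kurzweil_Integration.integrable_combine[OF ab bc])
  then have "integral {a..c} ?f = integral {a..b} ?f + integral {b..c} ?f"
    using ab bc by (simp add: Henstock_Kurzweil_Integration.integral_combine)
  also have "integral {a..b} ?f = hlength a b u v"
    unfolding hlength_def by (rule integral_cong) auto
  also have "integral {b..c} ?f = hlength b c u' v'"
    unfolding hlength_def by (rule integral_spike[of "{b}"]) auto
  finally show ?thesis by (simp add: hlength_def)
qed

section \<open>Horizontal connectivity\<close>

definition hjoinable :: "real \<Rightarrow> real \<Rightarrow> cmat \<Rightarrow> cmat \<Rightarrow> bool" where
  "hjoinable a b x y \<longleftrightarrow> (\<exists>\<gamma> u v. horizontal_on a b \<gamma> u v \<and> \<gamma> a = x \<and> \<gamma> b = y)"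

lemma hjoinable_trans:
  assumes "hjoinable a b x y" "hjoinable b c y z"
  shows "hjoinable a c x z"
proof -
  obtain \<gamma> u v where \<gamma>: "horizontal_on a b \<gamma> u v" "\<gamma> a = x" "\<gamma> b = y"
    using assms(1) by (auto simp: hjoinable_def)
  obtain \<delta> u' v' where \<delta>: "horizontal_on b c \<delta> u' v'" "\<delta> b = y" "\<delta> c = z"
    using assms(2) by (auto simp: hjoinable_def)
  have "a \<le> b" "b \<le> c" using \<gamma> \<delta> by (simp_all add: horizontal_on_def)
  with \<gamma> \<delta> horizontal_on_join[OF \<gamma>(1) \<delta>(1)] show ?thesis
    unfolding hjoinable_def by (intro exI[of _ "\<lambda>t. if t \<le> b then \<gamma> t else \<delta> t"] exI) auto
qed

lemma hjoinable_mult_left: "hjoinable a b x y \<Longrightarrow> z \<in> SU2 \<Longrightarrow> hjoinable a b (z ** x) (z ** y)"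
  unfolding hjoinable_def using horizontal_on_mult_left by fastforce

lemma hjoinable_exp_p1:
  assumes "x \<in> SU2" "a < b"
  shows "hjoinable a b x (x ** exp_p1 \<theta>)"
  using horizontal_on_exp_p1[OF assms(1), of a b "\<theta> / (b - a)"] assms(2)
  unfolding hjoinable_def by (intro exI) (auto simp: exp_p1_0)

lemma hjoinable_exp_p2:
  assumes "x \<in> SU2" "a < b"
  shows "hjoinable a b x (x ** exp_p2 \<theta>)"
  using horizontal_on_exp_p2[OF assms(1), of a b "\<theta> / (b - a)"] assms(2)
  unfolding hjoinable_def by (intro exI) (auto simp: exp_p2_0)

lemma hjoinable_from_1:
  assumes "y \<in> SU2" "a < b"
  shows "hjoinable a b (mat 1) y"
proof -
  obtain \<alpha> \<beta> c where y: "y = exp_p2 (-\<beta>) ** exp_p1 \<alpha> ** exp_p2 c"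
    using SU2_euler_angles[OF assms(1)] by blast
  define d where "d = (b - a) / 3"
  have "0 < d" "a + d < a + 2*d" "a + 2*d < b" using assms(2) by (simp_all add: d_def field_simps)
  have "hjoinable a (a + d) (mat 1) (exp_p2 (-\<beta>))"
    using hjoinable_exp_p2[OF mat_1_SU2, of a "a + d"] \<open>0 < d\<close> by simp
  moreover have "hjoinable (a + d) (a + 2*d) (exp_p2 (-\<beta>)) (exp_p2 (-\<beta>) ** exp_p1 \<alpha>)"
    using \<open>a + d < a + 2*d\<close> by (rule hjoinable_exp_p1[OF exp_p2_SU2])
  moreover have "hjoinable (a + 2*d) b (exp_p2 (-\<beta>) ** exp_p1 \<alpha>) y"
    unfolding y using \<open>a + 2*d < b\<close> by (intro hjoinable_exp_p2 SU2_mult exp_p1_SU2 exp_p2_SU2)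
  ultimately show ?thesis by (blast intro: hjoinable_trans)
qed

lemma hjoinable_SU2:
  assumes "x \<in> SU2" "y \<in> SU2" "a < b"
  shows "hjoinable a b x y"
proof -
  have "hjoinable a b (x ** mat 1) (x ** (adj x ** y))"
    using assms by (intro hjoinable_mult_left hjoinable_from_1 SU2_mult SU2_adj)
  then show ?thesis using assms(1) by (simp add: matrix_mul_assoc SU2_mult_adj)
qed

section \<open>Lifting curves from L(4,1)\<close>

lemma quot_curve_len_cls:
  "horizontal_on 0 1 \<gamma> u v \<Longrightarrow> quot_curve_len (\<lambda>t. cls (\<gamma> t)) (hlength 0 1 u v)"
  unfolding quot_curve_len_def
  by (intro exI[of _ "1::nat"] exI[of _ "\<lambda>i::nat. if i = 0 then 0 else 1::real"]
      exI[of _ "\<lambda>_. \<gamma>"] exI[of _ "\<lambda>_. u"] exI[of _ "\<lambda>_. v"]) simp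

lemma horizontal_on_extend_by_deck:
  assumes \<gamma>: "horizontal_on a b \<gamma> u v" and \<delta>: "horizontal_on b c \<delta> u' v'"
    and "cls (\<delta> b) = cls (\<gamma> b)"
  obtains \<eta> \<mu> \<nu> k where "horizontal_on a c \<eta> \<mu> \<nu>" "\<eta> a = \<gamma> a" "\<eta> c = \<delta> c ** deck k"
    "hlength a c \<mu> \<nu> = hlength a b u v + hlength b c u' v'"
proof -
  have "a \<le> b" "b \<le> c" "\<gamma> b \<in> SU2" "\<delta> b \<in> SU2"
    using \<gamma> \<delta> by (auto simp: horizontal_on_def)
  then have "\<gamma> b \<in> cls (\<delta> b)" using assms(3) self_in_cls by simp
  then obtain k where k: "\<gamma> b = \<delta> b ** deck k"
    using \<open>\<delta> b \<in> SU2\<close> by (auto simp: cls_eq_deck_orbit)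
  let ?\<delta>' = "\<lambda>t. \<delta> t ** deck k" and ?u' = "\<lambda>t. cos (of_int k * pi) * u' t"
  have \<delta>': "horizontal_on b c ?\<delta>' ?u' v'" by (rule horizontal_on_mult_deck[OF \<delta>])
  show thesis
  proof
    show "horizontal_on a c (\<lambda>t. if t \<le> b then \<gamma> t else ?\<delta>' t)
        (\<lambda>t. if t \<le> b then u t else ?u' t) (\<lambda>t. if t \<le> b then v t else v' t)"
      using \<gamma> \<delta>' k by (rule horizontal_on_join)
    show "hlength a c (\<lambda>t. if t \<le> b then u t else ?u' t) (\<lambda>t. if t \<le> b then v t else v' t)
        = hlength a b u v + hlength b c u' v'"
      by (simp add: hlength_join[OF \<gamma> \<delta>'] hlength_cos_int_pi)
  qed (use \<open>a \<le> b\<close> \<open>b \<le> c\<close> k in auto)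
qed

lemma quot_curve_len_lift:
  assumes "quot_curve_len \<sigma> len" "g1 \<in> SU2" "cls g1 = \<sigma> 0"
  obtains \<gamma> u v where "horizontal_on 0 1 \<gamma> u v" "\<gamma> 0 = g1" "cls (\<gamma> 1) = \<sigma> 1"
    "hlength 0 1 u v = len"
proof -
  obtain n ts \<gamma>s u1s u2s where "ts 0 = 0" "ts n = 1"
    and piece: "\<forall>i<n. horizontal_on (ts i) (ts (Suc i)) (\<gamma>s i) (u1s i) (u2s i) \<and>
                       (\<forall>t\<in>{ts i..ts (Suc i)}. cls (\<gamma>s i t) = \<sigma> t)"
    and len: "len = (\<Sum>i<n. hlength (ts i) (ts (Suc i)) (u1s i) (u2s i))"
    using assms(1) unfolding quot_curve_len_def by blast
  have "\<exists>\<gamma> u v. horizontal_on 0 (ts m) \<gamma> u v \<and> \<gamma> 0 = g1 \<and> cls (\<gamma> (ts m)) = \<sigma> (ts m) \<and>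
      hlength 0 (ts m) u v = (\<Sum>i<m. hlength (ts i) (ts (Suc i)) (u1s i) (u2s i))" if "m \<le> n" for m
    using that
  proof (induction m)
    case 0
    have "horizontal_on 0 0 (\<lambda>t. g1 ** exp_p2 (0 * (t - 0))) (\<lambda>t. 0) (\<lambda>t. 0)"
      using horizontal_on_exp_p2[OF assms(2), of 0 0 0] by simp
    then show ?case using \<open>ts 0 = 0\<close> assms(3) by (auto simp: exp_p2_0 hlength_def)
  next
    case (Suc m)
    then obtain \<gamma> u v where \<gamma>: "horizontal_on 0 (ts m) \<gamma> u v" "\<gamma> 0 = g1"
      "cls (\<gamma> (ts m)) = \<sigma> (ts m)"
      "hlength 0 (ts m) u v = (\<Sum>i<m. hlength (ts i) (ts (Suc i)) (u1s i) (u2s i))"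
      by auto
    have \<delta>: "horizontal_on (ts m) (ts (Suc m)) (\<gamma>s m) (u1s m) (u2s m)"
      and cls_\<delta>: "\<forall>t\<in>{ts m..ts (Suc m)}. cls (\<gamma>s m t) = \<sigma> t"
      using piece Suc.prems by auto
    then have "ts m \<le> ts (Suc m)" "\<gamma>s m (ts (Suc m)) \<in> SU2"
      by (auto simp: horizontal_on_def)
    with cls_\<delta> \<gamma>(3) obtain \<eta> \<mu> \<nu> k where "horizontal_on 0 (ts (Suc m)) \<eta> \<mu> \<nu>" "\<eta> 0 = \<gamma> 0"
      "\<eta> (ts (Suc m)) = \<gamma>s m (ts (Suc m)) ** deck k"
      "hlength 0 (ts (Suc m)) \<mu> \<nu> = hlength 0 (ts m) u v + hlength (ts m) (ts (Suc m)) (u1s m) (u2s m)"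
      by (auto intro: horizontal_on_extend_by_deck[OF \<gamma>(1) \<delta>])
    with \<gamma> cls_\<delta> \<open>ts m \<le> ts (Suc m)\<close> \<open>\<gamma>s m (ts (Suc m)) \<in> SU2\<close> show ?case
      by (intro exI[of _ \<eta>] exI[of _ \<mu>] exI[of _ \<nu>]) (auto simp: cls_mult_deck)
  qed
  from this[of n] that show thesis using \<open>ts n = 1\<close> len by auto
qed

definition hlengths :: "cmat \<Rightarrow> cmat \<Rightarrow> real set" where
  "hlengths x y = {hlength 0 1 u1 u2 | \<gamma> u1 u2. horizontal_on 0 1 \<gamma> u1 u2 \<and> \<gamma> 0 = x \<and> \<gamma> 1 = y}"

lemma quot_lengths_eq_UN_hlengths:
  assumes "g \<in> SU2" "h \<in> SU2" "g1 \<in> cls g"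
  shows "{len | \<sigma> len. quot_curve_len \<sigma> len \<and> \<sigma> 0 = cls g \<and> \<sigma> 1 = cls h}
       = (\<Union>h1\<in>cls h. hlengths g1 h1)"
proof -
  have g1: "g1 \<in> SU2" "cls g1 = cls g"
    using assms cls_subset_SU2 cls_eq by blast+
  have "l \<in> (\<Union>h1\<in>cls h. hlengths g1 h1)"
    if "l \<in> {len | \<sigma> len. quot_curve_len \<sigma> len \<and> \<sigma> 0 = cls g \<and> \<sigma> 1 = cls h}" for l
  proof -
    from that obtain \<sigma> where \<sigma>: "quot_curve_len \<sigma> l" "\<sigma> 0 = cls g" "\<sigma> 1 = cls h" by blast
    then have "cls g1 = \<sigma> 0" using g1 by simp
    then obtain \<gamma> u v where \<gamma>: "horizontal_on 0 1 \<gamma> u v" "\<gamma> 0 = g1" "cls (\<gamma> 1) = \<sigma> 1"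
      "hlength 0 1 u v = l"
      by (rule quot_curve_len_lift[OF \<sigma>(1) g1(1)])
    then have "\<gamma> 1 \<in> cls h"
      using self_in_cls[of "\<gamma> 1"] \<sigma>(3) by (auto simp: horizontal_on_def)
    with \<gamma> show ?thesis unfolding hlengths_def by blast
  qed
  moreover have "l \<in> {len | \<sigma> len. quot_curve_len \<sigma> len \<and> \<sigma> 0 = cls g \<and> \<sigma> 1 = cls h}"
    if "l \<in> (\<Union>h1\<in>cls h. hlengths g1 h1)" for l
  proof -
    from that obtain h1 \<gamma> u v where "h1 \<in> cls h" and \<gamma>: "horizontal_on 0 1 \<gamma> u v" "\<gamma> 0 = g1"
      "\<gamma> 1 = h1" "l = hlength 0 1 u v"
      unfolding hlengths_def by blast
    then have "cls (\<gamma> 0) = cls g" "cls (\<gamma> 1) = cls h"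
      using g1 cls_eq[OF assms(2)] by simp_all
    with quot_curve_len_cls[OF \<gamma>(1)] \<gamma>(4) show ?thesis by blast
  qed
  ultimately show ?thesis by blast
qed

lemma sr_dist_eq_Inf_hlengths: "sr_dist x y = Inf (hlengths x y)"
  by (simp add: sr_dist_def hlengths_def)

theorem proposition6:
  assumes "g \<in> SU2" and "h \<in> SU2" and "g1 \<in> cls g"
  shows "(\<exists>h1\<in>cls h. quot_dist (cls g) (cls h) = sr_dist g1 h1) \<and>
         (\<forall>h1\<in>cls h. quot_dist (cls g) (cls h) \<le> sr_dist g1 h1)"
proof -
  have "g1 \<in> SU2" using assms(3) cls_subset_SU2 by blast
  have nonempty: "hlengths g1 h1 \<noteq> {}" if "h1 \<in> cls h" for h1
  proof -
    have "hjoinable 0 1 g1 h1"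
      using \<open>g1 \<in> SU2\<close> that cls_subset_SU2 by (intro hjoinable_SU2) auto
    then show ?thesis by (auto simp: hjoinable_def hlengths_def)
  qed
  have "bdd_below (\<Union>h1\<in>cls h. hlengths g1 h1)"
    unfolding bdd_below_def hlengths_def using hlength_nonneg by blast
  then have "Inf (\<Union>h1\<in>cls h. hlengths g1 h1) = (INF h1\<in>cls h. sr_dist g1 h1)"
    using cINF_UNION[of "cls h" "hlengths g1" "\<lambda>l. l"] nonempty self_in_cls[OF assms(2)]
    by (auto simp: sr_dist_eq_Inf_hlengths)
  then have "quot_dist (cls g) (cls h) = (INF h1\<in>cls h. sr_dist g1 h1)"
    unfolding quot_dist_def quot_lengths_eq_UN_hlengths[OF assms] .
  moreover have "finite (sr_dist g1 ` cls h)" "sr_dist g1 ` cls h \<noteq> {}"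
    using finite_cls[OF assms(2)] self_in_cls[OF assms(2)] by auto
  ultimately show ?thesis
    using Min_in Min_le by (auto simp: cInf_eq_Min)
qed

end
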